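(* Assume Assumptions (LS) and (LT) below hold, and let $\rho$ and $G$ be the constants of Assumption (LS). There exist $C>0$, $\delta>0$ and $r_0$ such that for all $r>r_0$ and $|z|\le\rho r$, $$\mathbb{P}\left(X_r^z<\mu r-\frac{Gz^2}{r}-Cr^{1/3}\right)\ge\delta.$$
   Context: Let $\{\xi_v:v\in\mathbb{Z}^2\}$ be i.i.d. random variables with a common law $\nu$ supported on $[0,\infty)$. A directed path is an up-right nearest-neighbour path in $\mathbb{Z}^2$, and its weight is $\ell(\gamma)=\sum_{u\in\gamma}\xi_u$. For $u\preceq v$ coordinatewise, $X_{u,v}=\max_{\gamma:u\to v}\ell(\gamma)$ over directed paths from $u$ to $v$ ($-\infty$ if none). For $r\in\mathbb{N}$, $z\in\mathbb{Z}$, $X_r^z=X_{(1,1),(r-z,r+z)}$ and $X_r=X_r^0$. It is assumed that $\mu=\lim_{r\to\infty}r^{-1}\mathbb{E}[X_r]<\infty$. Assumption (LS): there exist positive finite constants $\rho,G,H,g_1,g_2$ such that for all large enough $r$ and all $z\in[-\rho r,\rho r]$, $\mathbb{E}[X_r^z]\in \mu r-G\frac{z^2}{r}+\left[-H\frac{z^4}{r^3},0\right]+\left[-g_1r^{1/3},-g_2r^{1/3}\right]$. Assumption (LT): there exists $\alpha>0$ such that for every $\varepsilon>0$ there exist positive finite $c,\theta_0,r_0$ (depending only on $\varepsilon$) such that for all $r>r_0$, $\theta>\theta_0$ and $|z|\le(1-\varepsilon)r$, $\mathbb{P}(X_r^z-\mathbb{E}[X_r^z]<-\theta r^{1/3})\le\exp(-c\theta^\alpha)$.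 *)

theory Defs
  imports "HOL-Probability.Probability"
begin

definition dpath :: "(int \<times> int) list \<Rightarrow> bool" where
  "dpath \<gamma> \<longleftrightarrow> \<gamma> \<noteq> [] \<and>
     (\<forall>i. Suc i < length \<gamma> \<longrightarrow>
        (\<gamma> ! Suc i = (fst (\<gamma> ! i) + 1, snd (\<gamma> ! i)) \<or>
         \<gamma> ! Suc i = (fst (\<gamma> ! i), snd (\<gamma> ! i) + 1)))"

definition dpaths :: "int \<times> int \<Rightarrow> int \<times> int \<Rightarrow> (int \<times> int) list set" where
  "dpaths u v = {\<gamma>. dpath \<gamma> \<and> hd \<gamma> = u \<and> last \<gamma> = v}"

definition pweight :: "(int \<times> int \<Rightarrow> 'a \<Rightarrow> real) \<Rightarrow> (int \<times> int) list \<Rightarrow> 'a \<Rightarrow> real" where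
  "pweight \<xi> \<gamma> \<omega> = sum_list (map (\<lambda>p. \<xi> p \<omega>) \<gamma>)"

(* last passage value X_{u,v}; only meaningful when dpaths u v is nonempty
   (the paper's value -infinity for the empty case is never used below) *)
definition LPP :: "(int \<times> int \<Rightarrow> 'a \<Rightarrow> real) \<Rightarrow> int \<times> int \<Rightarrow> int \<times> int \<Rightarrow> 'a \<Rightarrow> real" where
  "LPP \<xi> u v \<omega> = Max ((\<lambda>\<gamma>. pweight \<xi> \<gamma> \<omega>) ` dpaths u v)"

definition Xrz :: "(int \<times> int \<Rightarrow> 'a \<Rightarrow> real) \<Rightarrow> nat \<Rightarrow> int \<Rightarrow> 'a \<Rightarrow> real" where
  "Xrz \<xi> r z = LPP \<xi> (1, 1) (int r - z, int r + z)"

(* Assumption (LS) with constants rho, G, H, g1, g2.  The expectation being a real number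
   entails that X_r^z is finite (i.e. a directed path exists, |z| < r) and integrable;
   this is made explicit. *)
definition AssumptionLS ::
  "'a measure \<Rightarrow> (int \<times> int \<Rightarrow> 'a \<Rightarrow> real) \<Rightarrow> real \<Rightarrow> real \<Rightarrow> real \<Rightarrow> real \<Rightarrow> real \<Rightarrow> real \<Rightarrow> bool" where
  "AssumptionLS M \<xi> \<mu> \<rho> G H g1 g2 \<longleftrightarrow>
     (\<exists>R. \<forall>r::nat. real r \<ge> R \<longrightarrow> (\<forall>z::int. real_of_int \<bar>z\<bar> \<le> \<rho> * real r \<longrightarrow>
        \<bar>z\<bar> < int r \<and> integrable M (Xrz \<xi> r z) \<and>
        (\<exists>a b. a \<in> {- H * real_of_int z ^ 4 / real r ^ 3 .. 0} \<and>
               b \<in> {- g1 * real r powr (1/3) .. - g2 * real r powr (1/3)} \<and>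
               (\<integral>\<omega>. Xrz \<xi> r z \<omega> \<partial>M) = \<mu> * real r - G * real_of_int z ^ 2 / real r + a + b)))"

definition AssumptionLT :: "'a measure \<Rightarrow> (int \<times> int \<Rightarrow> 'a \<Rightarrow> real) \<Rightarrow> bool" where
  "AssumptionLT M \<xi> \<longleftrightarrow>
     (\<exists>\<alpha>>0. \<forall>\<epsilon>>0. \<exists>c>0. \<exists>\<theta>0>0. \<exists>r0>0.
        \<forall>r::nat. real r > r0 \<longrightarrow> (\<forall>\<theta>. \<theta> > \<theta>0 \<longrightarrow> (\<forall>z::int. real_of_int \<bar>z\<bar> \<le> (1 - \<epsilon>) * real r \<longrightarrow>
          measure M {\<omega> \<in> space M. Xrz \<xi> r z \<omega> - (\<integral>\<omega>'. Xrz \<xi> r z \<omega>' \<partial>M)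
                                      < - \<theta> * real r powr (1/3)}
            \<le> exp (- c * \<theta> powr \<alpha>))))"

end

theory Submission
  imports Defs "HOL-Real_Asymp.Real_Asymp"
begin

text \<open>
  Let s = r powr (1/3) and Y = X_r^z - E X_r^z. Since E Y = 0, Y cannot stay above a s with
  high probability unless its negative part is large; but by (LT) the part of it beyond K s has
  expectation at most s times the tail sum over k \<ge> K of exp (-c k powr \<alpha>), which is small
  for large K. Bounding Y below by a s off the event {Y < a s} and by -K s - max 0 (-Y - K s) on
  it, and taking expectations, gives P(Y < a s) \<ge> (a - tail)/(a + K), uniformly in r and z.
  By (LS), E X_r^z \<le> \<mu> r - G z^2/r - g2 s, so for a = g2/2 the event {Y < a s} lies inside
  {X_r^z < \<mu> r - G z^2/r - a s}.
\<close>

lemma pos_part_le_suminf_indicator: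
  fixes y s :: real
  assumes s: "s > 0"
  shows "ennreal (max 0 y) \<le> (\<Sum>i. ennreal s * indicator {real i * s <..} y)"
proof (cases "y \<le> 0")
  case True
  then show ?thesis by simp
next
  case False
  define n where "n = nat \<lceil>y / s\<rceil>"
  have below: "real i * s < y" if "i < n" for i
  proof -
    have "real i < y / s"
      using that unfolding n_def by linarith
    then show ?thesis
      using s by (simp add: less_divide_eq)
  qed
  have "y / s \<le> real n"
    unfolding n_def by (rule real_nat_ceiling_ge)
  then have "y \<le> real n * s"
    using s by (simp add: divide_le_eq)
  then have "ennreal (max 0 y) \<le> ennreal (real n * s)"
    using s by (intro ennreal_leI) simp
  also have "\<dots> = (\<Sum>i<n. ennreal s)"
    using s by (simp add: ennreal_mult ennreal_of_nat_eq_real_of_nat)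
  also have "\<dots> = (\<Sum>i<n. ennreal s * indicator {real i * s <..} y)"
    using below by simp
  also have "\<dots> \<le> (\<Sum>i. ennreal s * indicator {real i * s <..} y)"
    by (rule sum_le_suminf) auto
  finally show ?thesis .
qed

lemma (in prob_space) expectation_pos_part_le_tail_sum:
  assumes Z: "Z \<in> borel_measurable M" and s: "s > 0" and e: "summable e"
    and tail: "\<And>i. prob {\<omega> \<in> space M. Z \<omega> > real i * s} \<le> e i"
  shows "expectation (\<lambda>\<omega>. max 0 (Z \<omega>)) \<le> s * suminf e"
proof -
  define A where "A i = {\<omega> \<in> space M. Z \<omega> > real i * s}" for i
  have A: "A i \<in> events" for i
    unfolding A_def using Z by measurable
  have e_nonneg: "0 \<le> e i" for i
    using tail[of i] measure_nonneg order_trans by blast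
  have "(\<integral>\<^sup>+\<omega>. ennreal (max 0 (Z \<omega>)) \<partial>M) \<le> (\<integral>\<^sup>+\<omega>. (\<Sum>i. ennreal s * indicator (A i) \<omega>) \<partial>M)"
    using pos_part_le_suminf_indicator[OF s] by (intro nn_integral_mono) (simp add: A_def indicator_def)
  also have "\<dots> = (\<Sum>i. \<integral>\<^sup>+\<omega>. ennreal s * indicator (A i) \<omega> \<partial>M)"
    using A by (intro nn_integral_suminf) auto
  also have "\<dots> = (\<Sum>i. ennreal s * emeasure M (A i))"
    using A by (simp add: nn_integral_cmult_indicator)
  also have "\<dots> \<le> (\<Sum>i. ennreal (s * e i))"
    using tail s by (intro suminf_le)
      (auto simp: A_def emeasure_eq_measure ennreal_mult[symmetric] intro!: ennreal_leI mult_left_mono)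
  also have "\<dots> = ennreal (s * suminf e)"
    using e e_nonneg s by (simp add: suminf_ennreal2 summable_mult suminf_mult)
  finally show ?thesis
    using Z s e e_nonneg by (simp add: integral_eq_nn_integral enn2real_leI suminf_nonneg)
qed

lemma (in prob_space) mean_zero_prob_less_ge:
  assumes Y: "integrable M Y" and mean: "expectation Y = 0" and a: "a > 0" and t: "t \<ge> 0"
  shows "(a - expectation (\<lambda>\<omega>. max 0 (- Y \<omega> - t))) / (a + t) \<le> prob {\<omega> \<in> space M. Y \<omega> < a}"
proof -
  define B where "B = {\<omega> \<in> space M. Y \<omega> < a}"
  define T where "T = (\<lambda>\<omega>. max 0 (- Y \<omega> - t))"
  have B: "B \<in> events"
    unfolding B_def using Y by measurable
  have T: "integrable M T"
    unfolding T_def using Y by auto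
  have indicators: "integrable M (indicat_real B)" "integrable M (indicat_real (space M - B))"
    using B by (auto simp: emeasure_eq_measure)
  have lower: "a * indicator (space M - B) \<omega> - t * indicator B \<omega> - T \<omega> \<le> Y \<omega>"
    if "\<omega> \<in> space M" for \<omega>
    using that t by (auto simp: B_def T_def indicator_def)
  have "a * prob (space M - B) - t * prob B - expectation T
      = expectation (\<lambda>\<omega>. a * indicator (space M - B) \<omega> - t * indicator B \<omega> - T \<omega>)"
    using B T indicators by simp
  also have "\<dots> \<le> expectation Y"
    using B T Y indicators lower by (intro integral_mono) auto
  finally have "a - expectation T \<le> (a + t) * prob B"
    using B mean by (simp add: prob_compl algebra_simps)
  then show ?thesis
    using a t by (simp add: B_def T_def pos_divide_le_eq mult.commute)
qed

lemma (in prob_space) prob_less_ge_of_lower_tails: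
  assumes X: "integrable M X" and s: "s > 0" and a: "a > 0" and e: "summable e"
    and tail: "\<And>i. prob {\<omega> \<in> space M. X \<omega> - expectation X < - real (i + K) * s} \<le> e i"
    and threshold: "expectation X + a * s \<le> x"
  shows "(a - suminf e) / (a + real K) \<le> prob {\<omega> \<in> space M. X \<omega> < x}"
proof -
  define Y where "Y = (\<lambda>\<omega>. X \<omega> - expectation X)"
  have Y: "integrable M Y"
    using X by (simp add: Y_def)
  have mean: "expectation Y = 0"
    using X by (simp add: Y_def prob_space)
  have "expectation (\<lambda>\<omega>. max 0 (- Y \<omega> - real K * s)) \<le> s * suminf e"
  proof (rule expectation_pos_part_le_tail_sum[OF _ s e])
    show "(\<lambda>\<omega>. - Y \<omega> - real K * s) \<in> borel_measurable M"
      using Y by measurable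
    show "prob {\<omega> \<in> space M. - Y \<omega> - real K * s > real i * s} \<le> e i" for i
      using tail[of i] by (simp add: Y_def algebra_simps)
  qed
  then have numerator: "(a - suminf e) * s \<le> a * s - expectation (\<lambda>\<omega>. max 0 (- Y \<omega> - real K * s))"
    by (simp add: algebra_simps)
  have "(a - suminf e) / (a + real K) = ((a - suminf e) * s) / ((a + real K) * s)"
    using s by simp
  also have "\<dots> \<le> (a * s - expectation (\<lambda>\<omega>. max 0 (- Y \<omega> - real K * s))) / ((a + real K) * s)"
    using numerator a s by (intro divide_right_mono) auto
  also have "\<dots> \<le> prob {\<omega> \<in> space M. Y \<omega> < a * s}"
    using mean_zero_prob_less_ge[OF Y mean, of "a * s" "real K * s"] a s by (simp add: distrib_right)
  also have "\<dots> \<le> prob {\<omega> \<in> space M. X \<omega> < x}"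
    using threshold by (intro finite_measure_mono) (auto simp: Y_def, use X in measurable)
  finally show ?thesis .
qed

lemma summable_exp_neg_powr:
  fixes c \<alpha> :: real
  assumes "c > 0" "\<alpha> > 0"
  shows "summable (\<lambda>k::nat. exp (- c * real k powr \<alpha>))"
proof (rule summable_comparison_test_ev)
  have "((\<lambda>k::nat. exp (- c * real k powr \<alpha>) * real k ^ 2) \<longlongrightarrow> 0) at_top"
    using assms by real_asymp
  then have "eventually (\<lambda>k. exp (- c * real k powr \<alpha>) * real k ^ 2 < 1) sequentially"
    by (rule order_tendstoD) simp
  then show "eventually (\<lambda>k. norm (exp (- c * real k powr \<alpha>)) \<le> inverse (real k ^ 2)) sequentially"
    using eventually_gt_at_top[of "0::nat"] by eventually_elim (simp add: field_simps)
  show "summable (\<lambda>k::nat. inverse (real k ^ 2))"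
    by (rule inverse_power_summable) simp
qed

lemma summable_obtain_small_tail:
  fixes e :: "nat \<Rightarrow> real"
  assumes "summable e" and "\<epsilon> > 0"
  obtains K where "real K > \<theta>" and "(\<Sum>i. e (i + K)) \<le> \<epsilon>"
proof -
  obtain N where N: "\<And>n. n \<ge> N \<Longrightarrow> norm (\<Sum>i. e (i + n)) < \<epsilon>"
    using suminf_exist_split[OF assms(2,1)] by blast
  define K where "K = max N (nat \<lceil>\<theta>\<rceil> + 1)"
  show thesis
  proof (rule that)
    show "real K > \<theta>"
      unfolding K_def by linarith
    show "(\<Sum>i. e (i + K)) \<le> \<epsilon>"
      using N[of K] unfolding K_def by simp
  qed
qed

lemma AssumptionLS_rho_less_1:
  assumes "AssumptionLS M \<xi> \<mu> \<rho> G H g1 g2"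
  shows "\<rho> < 1"
proof (rule ccontr)
  assume "\<not> \<rho> < 1"
  from assms obtain R where R: "\<And>r z. real r \<ge> R \<Longrightarrow> real_of_int \<bar>z\<bar> \<le> \<rho> * real r \<Longrightarrow> \<bar>z\<bar> < int r"
    unfolding AssumptionLS_def by blast
  define r where "r = nat \<lceil>max R 0\<rceil>"
  have "real r \<ge> R"
    unfolding r_def by linarith
  moreover have "real_of_int \<bar>int r\<bar> \<le> \<rho> * real r"
    using \<open>\<not> \<rho> < 1\<close> by (simp add: mult_le_cancel_right1)
  ultimately have "\<bar>int r\<bar> < int r"
    by (rule R)
  then show False
    by simp
qed

lemma AssumptionLS_mean_le:
  assumes "AssumptionLS M \<xi> \<mu> \<rho> G H g1 g2"
  obtains R where
    "\<And>r z. real r \<ge> R \<Longrightarrow> real_of_int \<bar>z\<bar> \<le> \<rho> * real r \<Longrightarrow> integrable M (Xrz \<xi> r z)"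
    "\<And>r z. real r \<ge> R \<Longrightarrow> real_of_int \<bar>z\<bar> \<le> \<rho> * real r \<Longrightarrow>
       integral\<^sup>L M (Xrz \<xi> r z) \<le> \<mu> * real r - G * real_of_int z ^ 2 / real r - g2 * real r powr (1/3)"
proof -
  from assms obtain R where R: "\<And>r z. real r \<ge> R \<Longrightarrow> real_of_int \<bar>z\<bar> \<le> \<rho> * real r \<Longrightarrow>
      \<bar>z\<bar> < int r \<and> integrable M (Xrz \<xi> r z) \<and>
      (\<exists>a b. a \<in> {- H * real_of_int z ^ 4 / real r ^ 3 .. 0} \<and>
             b \<in> {- g1 * real r powr (1/3) .. - g2 * real r powr (1/3)} \<and>
             integral\<^sup>L M (Xrz \<xi> r z) = \<mu> * real r - G * real_of_int z ^ 2 / real r + a + b)"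
    unfolding AssumptionLS_def by blast
  show thesis
  proof (rule that)
    show "integrable M (Xrz \<xi> r z)" if "real r \<ge> R" "real_of_int \<bar>z\<bar> \<le> \<rho> * real r" for r z
      using R[OF that] by blast
    show "integral\<^sup>L M (Xrz \<xi> r z) \<le> \<mu> * real r - G * real_of_int z ^ 2 / real r - g2 * real r powr (1/3)"
      if "real r \<ge> R" "real_of_int \<bar>z\<bar> \<le> \<rho> * real r" for r z
      using R[OF that] by auto
  qed
qed

lemma AssumptionLT_summable_tails:
  assumes "AssumptionLT M \<xi>" and "\<rho> < 1"
  obtains e \<theta>0 r0 where "summable e"
    "\<And>r k z. real r > r0 \<Longrightarrow> real k > \<theta>0 \<Longrightarrow> real_of_int \<bar>z\<bar> \<le> \<rho> * real r \<Longrightarrow>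
       measure M {\<omega> \<in> space M. Xrz \<xi> r z \<omega> - integral\<^sup>L M (Xrz \<xi> r z) < - real k * real r powr (1/3)}
         \<le> e k"
proof -
  from assms(1) obtain \<alpha> where "\<alpha> > 0" and LT: "\<And>\<epsilon>. \<epsilon> > 0 \<Longrightarrow> \<exists>c>0. \<exists>\<theta>0>0. \<exists>r0>0.
      \<forall>r::nat. real r > r0 \<longrightarrow> (\<forall>\<theta>. \<theta> > \<theta>0 \<longrightarrow> (\<forall>z::int. real_of_int \<bar>z\<bar> \<le> (1 - \<epsilon>) * real r \<longrightarrow>
        measure M {\<omega> \<in> space M. Xrz \<xi> r z \<omega> - integral\<^sup>L M (Xrz \<xi> r z) < - \<theta> * real r powr (1/3)}
          \<le> exp (- c * \<theta> powr \<alpha>)))"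
    unfolding AssumptionLT_def by blast
  from LT[of "1 - \<rho>"] assms(2) obtain c \<theta>0 r0 where "c > 0" and
    tail: "\<And>r \<theta> z. real r > r0 \<Longrightarrow> \<theta> > \<theta>0 \<Longrightarrow> real_of_int \<bar>z\<bar> \<le> \<rho> * real r \<Longrightarrow>
        measure M {\<omega> \<in> space M. Xrz \<xi> r z \<omega> - integral\<^sup>L M (Xrz \<xi> r z) < - \<theta> * real r powr (1/3)}
          \<le> exp (- c * \<theta> powr \<alpha>)"
    by (simp; blast)
  show thesis
  proof (rule that)
    show "summable (\<lambda>k. exp (- c * real k powr \<alpha>))"
      using \<open>c > 0\<close> \<open>\<alpha> > 0\<close> by (rule summable_exp_neg_powr)
    show "measure M {\<omega> \<in> space M. Xrz \<xi> r z \<omega> - integral\<^sup>L M (Xrz \<xi> r z) < - real k * real r powr (1/3)}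
        \<le> exp (- c * real k powr \<alpha>)"
      if "real r > r0" "real k > \<theta>0" "real_of_int \<bar>z\<bar> \<le> \<rho> * real r" for r k z
      using tail[OF that] .
  qed
qed

theorem lemma4p2:
  fixes M :: "'a measure" and \<xi> :: "int \<times> int \<Rightarrow> 'a \<Rightarrow> real" and \<nu> :: "real measure"
    and \<mu> \<rho> G H g1 g2 :: real
  assumes P: "prob_space M"
    and rv: "\<And>v. \<xi> v \<in> borel_measurable M"
    and indep: "prob_space.indep_vars M (\<lambda>_. borel) \<xi> UNIV"
    and law: "\<And>v. distr M borel (\<xi> v) = \<nu>"
    and supp: "emeasure \<nu> {0..} = 1"
    and integ: "\<And>r. r \<ge> 1 \<Longrightarrow> integrable M (Xrz \<xi> r 0)"
    and mu: "(\<lambda>r::nat. (\<integral>\<omega>. Xrz \<xi> r 0 \<omega> \<partial>M) / real r) \<longlonglongrightarrow> \<mu>"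
    and pos: "\<rho> > 0" "G > 0" "H > 0" "g1 > 0" "g2 > 0"
    and LS: "AssumptionLS M \<xi> \<mu> \<rho> G H g1 g2"
    and LT: "AssumptionLT M \<xi>"
  shows "\<exists>C>0. \<exists>\<delta>>0. \<exists>r0. \<forall>r::nat. real r > r0 \<longrightarrow>
           (\<forall>z::int. real_of_int \<bar>z\<bar> \<le> \<rho> * real r \<longrightarrow>
              measure M {\<omega> \<in> space M. Xrz \<xi> r z \<omega>
                 < \<mu> * real r - G * real_of_int z ^ 2 / real r - C * real r powr (1/3)} \<ge> \<delta>)"
proof -
  interpret prob_space M
    by (rule P)
  obtain R where integrable: "\<And>r z. real r \<ge> R \<Longrightarrow> real_of_int \<bar>z\<bar> \<le> \<rho> * real r \<Longrightarrow> integrable M (Xrz \<xi> r z)"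
    and mean: "\<And>r z. real r \<ge> R \<Longrightarrow> real_of_int \<bar>z\<bar> \<le> \<rho> * real r \<Longrightarrow>
       expectation (Xrz \<xi> r z) \<le> \<mu> * real r - G * real_of_int z ^ 2 / real r - g2 * real r powr (1/3)"
    by (rule AssumptionLS_mean_le[OF LS]) blast
  obtain e \<theta>0 r1 where e: "summable e" and tail: "\<And>r k z. real r > r1 \<Longrightarrow> real k > \<theta>0 \<Longrightarrow>
       real_of_int \<bar>z\<bar> \<le> \<rho> * real r \<Longrightarrow>
       prob {\<omega> \<in> space M. Xrz \<xi> r z \<omega> - expectation (Xrz \<xi> r z) < - real k * real r powr (1/3)} \<le> e k"
    by (rule AssumptionLT_summable_tails[OF LT AssumptionLS_rho_less_1[OF LS]]) blast
  define C where "C = g2 / 2"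
  have C: "C > 0"
    using pos by (simp add: C_def)
  obtain K where K: "real K > \<theta>0" and small_tail: "(\<Sum>i. e (i + K)) \<le> C / 2"
    using summable_obtain_small_tail[OF e, of "C / 2"] C by auto
  define \<delta> where "\<delta> = (C / 2) / (C + real K)"
  have "measure M {\<omega> \<in> space M. Xrz \<xi> r z \<omega>
      < \<mu> * real r - G * real_of_int z ^ 2 / real r - C * real r powr (1/3)} \<ge> \<delta>"
    if r: "real r > max (max R r1) 0" and z: "real_of_int \<bar>z\<bar> \<le> \<rho> * real r" for r z
  proof -
    have "\<delta> \<le> (C - (\<Sum>i. e (i + K))) / (C + real K)"
      unfolding \<delta>_def using small_tail C by (intro divide_right_mono) auto
    also have "\<dots> \<le> prob {\<omega> \<in> space M. Xrz \<xi> r z \<omega>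
        < \<mu> * real r - G * real_of_int z ^ 2 / real r - C * real r powr (1/3)}"
    proof (rule prob_less_ge_of_lower_tails[OF _ _ C summable_ignore_initial_segment[OF e]])
      show "integrable M (Xrz \<xi> r z)"
        by (rule integrable[OF _ z]) (use r in simp)
      show "prob {\<omega> \<in> space M. Xrz \<xi> r z \<omega> - expectation (Xrz \<xi> r z)
          < - real (i + K) * real r powr (1/3)} \<le> e (i + K)" for i
        by (rule tail[OF _ _ z]) (use r K in auto)
      show "expectation (Xrz \<xi> r z) + C * real r powr (1/3)
          \<le> \<mu> * real r - G * real_of_int z ^ 2 / real r - C * real r powr (1/3)"
        using mean[OF _ z] r by (simp add: C_def)
    qed (use r in simp)
    finally show ?thesis .
  qed
  moreover have "\<delta> > 0"
    using C by (simp add: \<delta>_def)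
  ultimately show ?thesis
    using C by blast
qed

end
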